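(* Let $f_1,\dots,f_n$ be nondecreasing linear functions at least one of which is constant, and put $\beta_{\min}=\min\{\beta(f_i)\mid\alpha(f_i)=0\}$ and $\beta_{\rm OPT}=\min\{f^\sigma\mid\sigma\text{ a permutation of }[n]\}$ (each $f^\sigma$ is a constant function, identified with its value). Then $\beta_{\rm OPT}=\beta_{\min}$ if and only if $\theta(f_i)\in[\theta(\beta_{\min})-\pi,\theta(\beta_{\min})]_{2\pi}\cup\{\bot\}$ for every $i\in[n]$.
   Context: A linear function is $f(x)=ax+b$; $\alpha(f)=a$, $\beta(f)=b$; nondecreasing means $a\ge0$, constant means $a=0$. $\vec f=(b,1-a)^\top$ and $\theta(f)\in[0,2\pi)$ is its polar angle, $\theta(f)=\bot$ if $\vec f=0$. For a real $c$, $\theta(c)$ denotes the angle of the constant function $x\mapsto c$, i.e. the polar angle of $(c,1)^\top$. $[\theta_1,\theta_2]_{2\pi}=\{\theta\in[\lambda_1,\lambda_2]\mid\lambda_1-\theta_1,\lambda_2-\theta_2\in2\pi\mathbb{Z},\ \lambda_2-\lambda_1\in[0,2\pi)\}$. $f^\sigma=f_{\sigma(n)}\circ\cdots\circ f_{\sigma(1)}$. *)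

theory Defs
  imports "HOL-Analysis.Analysis" "HOL-Combinatorics.Permutations"
begin

text \<open>A linear function x \<mapsto> a x + b is represented by the pair (a, b).\<close>
type_synonym linfun = "real \<times> real"

definition alpha :: "linfun \<Rightarrow> real" where "alpha f = fst f"
definition beta :: "linfun \<Rightarrow> real" where "beta f = snd f"

definition lin :: "linfun \<Rightarrow> real \<Rightarrow> real" where
  "lin f x = alpha f * x + beta f"

definition polar_angle :: "real \<Rightarrow> real \<Rightarrow> real" where
  "polar_angle x y = (let t = Arg (Complex x y) in if t \<ge> 0 then t else t + 2 * pi)"

text \<open>theta f: polar angle of the vector (b, 1 - a); None stands for bottom.\<close>
definition theta :: "linfun \<Rightarrow> real option" where
  "theta f = (if beta f = 0 \<and> 1 - alpha f = 0 then None
              else Some (polar_angle (beta f) (1 - alpha f)))"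

definition theta_const :: "real \<Rightarrow> real" where
  "theta_const c = polar_angle c 1"

definition arc2pi :: "real \<Rightarrow> real \<Rightarrow> real set" where
  "arc2pi t1 t2 = {t. \<exists>l1 l2. l1 \<le> t \<and> t \<le> l2 \<and>
      (\<exists>k::int. l1 - t1 = 2 * pi * k) \<and> (\<exists>k::int. l2 - t2 = 2 * pi * k) \<and>
      0 \<le> l2 - l1 \<and> l2 - l1 < 2 * pi}"

text \<open>f^sigma = f_{sigma(n)} o ... o f_{sigma(1)} (indices 0-based).\<close>
definition fsigma :: "linfun list \<Rightarrow> (nat \<Rightarrow> nat) \<Rightarrow> real \<Rightarrow> real" where
  "fsigma fs \<sigma> = fold (\<lambda>i g. lin (fs ! \<sigma> i) \<circ> g) [0..<length fs] id"

end

theory Submission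
  imports Defs "HOL-Combinatorics.Multiset_Permutations"
begin

text \<open>
  Let \<open>m = \<beta>_min\<close>, attained by a constant function \<open>p\<close>. A composition is constant, and its
  value is obtained by pushing the value of its last constant factor through the factors
  applied after it. If \<open>m \<le> f m\<close> for every \<open>f\<close>, monotonicity shows that no composition
  drops below \<open>m\<close>, while applying \<open>p\<close> last attains \<open>m\<close>. If \<open>f m < m\<close> for some \<open>f\<close>,
  applying \<open>f\<close> right after \<open>p\<close> produces the value \<open>f m < m\<close>.
  Geometrically, \<open>m \<le> f m\<close> says that \<open>(\<beta> f, 1 - \<alpha> f)\<close> lies in the half-plane
  \<open>m y \<le> x\<close>; since \<open>(m, 1)\<close> has angle \<open>\<theta> m\<close>, the sign of \<open>m y - x\<close> is that of
  \<open>sin (\<theta> f - \<theta> m)\<close>, which is nonpositive exactly on the arc \<open>[\<theta> m - \<pi>, \<theta> m]\<close>.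
\<close>

lemma polar_angle_polar_form:
  assumes "x \<noteq> 0 \<or> y \<noteq> 0"
  obtains r where "r > 0" "x = r * cos (polar_angle x y)" "y = r * sin (polar_angle x y)"
proof -
  define z where "z = Complex x y"
  have "cmod z > 0" using assms by (auto simp: z_def complex_eq_iff)
  moreover have z: "rcis (cmod z) (Arg z) = z" by (rule rcis_cmod_Arg)
  moreover have "x = cmod z * cos (Arg z)" "y = cmod z * sin (Arg z)"
    using arg_cong[OF z, of Re] arg_cong[OF z, of Im] by (simp_all add: z_def)
  moreover have "cos (polar_angle x y) = cos (Arg z)" "sin (polar_angle x y) = sin (Arg z)"
    by (simp_all add: polar_angle_def z_def Let_def)
  ultimately show thesis
    by (intro that[of "cmod z"]) simp_all
qed

lemma mem_arc2pi_half_turn_iff: "t \<in> arc2pi (c - pi) c \<longleftrightarrow> sin (t - c) \<le> 0"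
proof
  assume "t \<in> arc2pi (c - pi) c"
  then obtain l1 l2 k1 k2 where l: "l1 \<le> t" "t \<le> l2" "0 \<le> l2 - l1" "l2 - l1 < 2 * pi"
      and k1: "l1 - (c - pi) = 2 * pi * of_int k1" and k2: "l2 - c = 2 * pi * of_int k2"
    unfolding arc2pi_def by blast
  then have "0 \<le> pi * (1 + 2 * of_int (k2 - k1))" "pi * (1 + 2 * of_int (k2 - k1)) < pi * 2"
    by (simp_all add: algebra_simps)
  then have "0 \<le> 1 + 2 * real_of_int (k2 - k1)" "1 + 2 * real_of_int (k2 - k1) < 2"
    using pi_gt_zero by (simp_all add: zero_le_mult_iff)
  then have "0 \<le> 1 + 2 * (k2 - k1)" "1 + 2 * (k2 - k1) < 2"
    by linarith+
  then have "k2 = k1" by presburger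
  then have "- pi \<le> t - c - 2 * pi * of_int k2" "t - c - 2 * pi * of_int k2 \<le> 0"
    using l k1 k2 by auto
  then have "sin (t - c - 2 * pi * of_int k2) \<le> 0"
    using sin_ge_zero[of "- (t - c - 2 * pi * of_int k2)"] sin_minus[of "t - c - 2 * pi * of_int k2"]
    by linarith
  then show "sin (t - c) \<le> 0"
    by (simp add: sin_diff)
next
  assume sin_le: "sin (t - c) \<le> 0"
  \<comment> \<open>reduce \<open>t - c\<close> modulo \<open>2 \<pi>\<close> into \<open>(- 2 \<pi>, 0]\<close>\<close>
  define k where "k = \<lceil>(t - c) / (2 * pi)\<rceil>"
  define u where "u = t - c - 2 * pi * of_int k"
  have "(t - c) / (2 * pi) \<le> of_int k" "of_int k < (t - c) / (2 * pi) + 1"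
    using ceiling_correct[of "(t - c) / (2 * pi)"] unfolding k_def by linarith+
  then have "u \<le> 0" "- 2 * pi < u"
    using pi_gt_zero by (simp_all add: u_def field_simps)
  have "sin u = sin (t - c)"
    by (simp add: u_def sin_diff)
  moreover have "- pi \<le> u"
  proof (rule ccontr)
    assume "\<not> - pi \<le> u"
    then have "0 < sin (u + 2 * pi)"
      using \<open>- 2 * pi < u\<close> by (intro sin_gt_zero) auto
    then show False
      using sin_le \<open>sin u = sin (t - c)\<close> by simp
  qed
  ultimately show "t \<in> arc2pi (c - pi) c"
    unfolding arc2pi_def mem_Collect_eq using \<open>u \<le> 0\<close>
    by (intro exI[of _ "c - pi + 2 * pi * of_int k"] exI[of _ "c + 2 * pi * of_int k"])
       (auto simp: u_def)
qed

lemma polar_angle_mem_arc2pi_iff: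
  assumes "x \<noteq> 0 \<or> y \<noteq> 0"
  shows "polar_angle x y \<in> arc2pi (theta_const m - pi) (theta_const m) \<longleftrightarrow> m * y \<le> x"
proof -
  obtain r where r: "r > 0" "x = r * cos (polar_angle x y)" "y = r * sin (polar_angle x y)"
    using polar_angle_polar_form[OF assms] by blast
  obtain s where s: "s > 0" "m = s * cos (theta_const m)" "1 = s * sin (theta_const m)"
    using polar_angle_polar_form[of m 1] unfolding theta_const_def by auto
  define t c where "t = polar_angle x y" and "c = theta_const m"
  have "m * y - x = (s * cos c) * (r * sin t) - (r * cos t) * (s * sin c)"
    using r(2,3) s(2,3) unfolding t_def c_def by (metis mult_1_right)
  also have "\<dots> = r * s * sin (t - c)"
    by (simp add: sin_diff algebra_simps)
  finally have "m * y \<le> x \<longleftrightarrow> (r * s) * sin (t - c) \<le> 0"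
    by linarith
  moreover have "(r * s) * sin (t - c) \<le> 0 \<longleftrightarrow> sin (t - c) \<le> 0"
    using r(1) s(1) by (simp add: mult_le_0_iff)
  ultimately show ?thesis
    by (simp add: t_def c_def mem_arc2pi_half_turn_iff)
qed

lemma theta_mem_arc2pi_iff:
  "(theta f = None \<or> (\<exists>t. theta f = Some t \<and> t \<in> arc2pi (theta_const m - pi) (theta_const m)))
    \<longleftrightarrow> m \<le> lin f m"
  by (cases "beta f = 0 \<and> alpha f = 1")
     (auto simp: theta_def lin_def polar_angle_mem_arc2pi_iff algebra_simps)

lemma fold_comp_apply: "fold (\<lambda>i g. h i \<circ> g) xs g x = fold h xs (g x)"
  by (induct xs arbitrary: g) auto

lemma fsigma_eq_fold_permute_list: "fsigma fs \<sigma> x = fold lin (permute_list \<sigma> fs) x"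
  unfolding fsigma_def permute_list_def
  by (simp add: fold_comp_apply[where h="\<lambda>i. lin (fs ! \<sigma> i)"] fold_map comp_def)

lemma fsigma_values_eq:
  "{fsigma fs \<sigma> x | \<sigma>. \<sigma> permutes {..<length fs}}
     = (\<lambda>ys. fold lin ys x) ` permutations_of_multiset (mset fs)"
proof -
  have "permutations_of_multiset (mset fs) = (\<lambda>\<sigma>. permute_list \<sigma> fs) ` {\<sigma>. \<sigma> permutes {..<length fs}}"
    by (auto simp: permutations_of_multiset_def elim!: mset_eq_permutation)
  then show ?thesis
    by (auto simp: fsigma_eq_fold_permute_list)
qed

lemma lin_const: "alpha f = 0 \<Longrightarrow> lin f x = beta f"
  by (simp add: lin_def)

lemma lin_mono: "0 \<le> alpha f \<Longrightarrow> x \<le> y \<Longrightarrow> lin f x \<le> lin f y"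
  by (simp add: lin_def mult_left_mono)

lemma fold_lin_ge:
  assumes "\<forall>f\<in>set ys. 0 \<le> alpha f \<and> m \<le> lin f m"
    and "m \<le> v \<or> (\<exists>f\<in>set ys. alpha f = 0)"
  shows "m \<le> fold lin ys v"
  using assms
proof (induction ys arbitrary: v)
  case Nil
  then show ?case by simp
next
  case (Cons f ys)
  have "m \<le> lin f v \<or> (\<exists>g\<in>set ys. alpha g = 0)"
  proof (cases "alpha f = 0")
    case True
    then show ?thesis
      using Cons.prems(1) lin_const by simp
  next
    case False
    then have "m \<le> v \<or> (\<exists>g\<in>set ys. alpha g = 0)"
      using Cons.prems(2) by auto
    moreover have "m \<le> v \<Longrightarrow> m \<le> lin f v"
      using Cons.prems(1) lin_mono[of f m v] by auto
    ultimately show ?thesis by blast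
  qed
  then show ?case
    using Cons by simp
qed

lemma Min_fold_lin_permutations_eq_iff:
  assumes nondec: "\<forall>f\<in>set fs. 0 \<le> alpha f"
    and p: "p \<in> set fs" "alpha p = 0"
  shows "Min ((\<lambda>ys. fold lin ys v) ` permutations_of_multiset (mset fs)) = beta p
    \<longleftrightarrow> (\<forall>f\<in>set fs. beta p \<le> lin f (beta p))"
    (is "Min ?S = ?m \<longleftrightarrow> _")
proof
  assume "Min ?S = ?m"
  show "\<forall>f\<in>set fs. ?m \<le> lin f ?m"
  proof
    fix f assume f: "f \<in> set fs"
    show "?m \<le> lin f ?m"
    proof (cases "f = p")
      case False
      let ?ys = "remove1 f (remove1 p fs) @ [p, f]"
      have "f \<in># mset fs - {#p#}"
        using f p False by (simp add: in_diff_count)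
      then have "mset ?ys = add_mset p (add_mset f (mset fs - {#p#} - {#f#}))"
        by (simp add: add_mset_commute)
      also have "\<dots> = mset fs"
        using \<open>f \<in># mset fs - {#p#}\<close> p(1) by (metis insert_DiffM set_mset_mset)
      finally have "?ys \<in> permutations_of_multiset (mset fs)"
        by (rule permutations_of_multisetI)
      then have "Min ?S \<le> fold lin ?ys v"
        by (intro Min_le) (simp_all del: fold_append)
      then show ?thesis
        using \<open>Min ?S = ?m\<close> lin_const[OF p(2)] by simp
    qed (simp add: lin_const p)
  qed
next
  assume lin_ge: "\<forall>f\<in>set fs. ?m \<le> lin f ?m"
  have "remove1 p fs @ [p] \<in> permutations_of_multiset (mset fs)"
    using p(1) by (simp add: permutations_of_multiset_def)
  moreover have "fold lin (remove1 p fs @ [p]) v = ?m"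
    using lin_const[OF p(2)] by simp
  ultimately have "?m \<in> ?S"
    by (metis image_eqI)
  moreover have "?m \<le> fold lin ys v" if "ys \<in> permutations_of_multiset (mset fs)" for ys
  proof -
    have "set ys = set fs"
      using that by (metis permutations_of_multisetD set_mset_mset)
    then show ?thesis
      using nondec lin_ge p by (intro fold_lin_ge) auto
  qed
  ultimately show "Min ?S = ?m"
    by (intro Min_eqI) auto
qed

theorem mainTheorem16:
  fixes fs :: "linfun list"
  assumes nondec: "\<forall>f\<in>set fs. alpha f \<ge> 0"
    and has_const: "\<exists>f\<in>set fs. alpha f = 0"
  shows "Min {fsigma fs \<sigma> 0 | \<sigma>. \<sigma> permutes {..<length fs}}
           = Min {beta f | f. f \<in> set fs \<and> alpha f = 0}
       \<longleftrightarrow> (\<forall>f\<in>set fs. theta f = None \<or>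
              (\<exists>t. theta f = Some t \<and>
                 t \<in> arc2pi (theta_const (Min {beta f | f. f \<in> set fs \<and> alpha f = 0}) - pi)
                             (theta_const (Min {beta f | f. f \<in> set fs \<and> alpha f = 0}))))"
proof -
  define B where "B = {beta f | f. f \<in> set fs \<and> alpha f = 0}"
  have "B = beta ` {f \<in> set fs. alpha f = 0}"
    unfolding B_def by blast
  then have "Min B \<in> B"
    using has_const by (intro Min_in) auto
  then obtain p where p: "p \<in> set fs" "alpha p = 0" and beta_min: "Min B = beta p"
    unfolding B_def by auto
  show ?thesis
    unfolding fsigma_values_eq B_def[symmetric] beta_min theta_mem_arc2pi_iff
    by (rule Min_fold_lin_permutations_eq_iff[OF nondec p])
qed

end
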